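(* Every topological space $X$ is $\Gamma$-embedded in its cone $\mathrm{Cone}(X)=([0,1]\times X)/(\{0\}\times X)$ (quotient topology); namely via the embedding $c\colon X\to\mathrm{Cone}(X)$, $x\mapsto 1x$, and the semigroup homomorphism $\sigma\colon\Gamma(X)\to\Gamma(\mathrm{Cone}(X))$ sending $f$ to $\sigma(f)\colon \eta((0,1]\times\mathrm{dom}(f))\to\eta((0,1]\times\mathrm{im}(f))$, $tx\mapsto tf(x)$.
   Context: $\eta\colon[0,1]\times X\to\mathrm{Cone}(X)$ is the quotient map and $tx=\eta(t,x)$. For a topological space $X$, $\Gamma(X)$ is the inverse monoid of homeomorphisms between open subsets of $X$ (including the empty map), with product $\psi\circ\phi\colon \phi^{-1}(\mathrm{dom}(\psi)\cap\mathrm{im}(\phi))\to\psi(\mathrm{dom}(\psi)\cap\mathrm{im}(\phi))$. Let $\Gamma(X)*X=\{(f,x)\in\Gamma(X)\times X: x\in\mathrm{dom}(f)\}$. $X$ is $\Gamma$-embedded in a space $Z$ if there exist a semigroup homomorphism $\sigma\colon\Gamma(X)\to\Gamma(Z)$ and a topological embedding $c\colon X\to Z$ such that for every $(f,x)\in\Gamma(X)*X$ one has $c(x)\in\mathrm{dom}(\sigma(f))$ and $\sigma(f)(c(x))=c(f(x))$. *)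

theory Defs
  imports "HOL-Analysis.Analysis"
begin

definition quotient_topology :: "'a topology \<Rightarrow> ('a \<Rightarrow> 'b) \<Rightarrow> 'b topology" where
  "quotient_topology X q =
     topology (\<lambda>U. U \<subseteq> q ` topspace X \<and> openin X {x \<in> topspace X. q x \<in> U})"

definition cone_rel :: "'a topology \<Rightarrow> ((real \<times> 'a) \<times> (real \<times> 'a)) set" where
  "cone_rel X = {((s, x), (t, y)). s \<in> {0..1} \<and> t \<in> {0..1} \<and> x \<in> topspace X \<and> y \<in> topspace X
                   \<and> ((s = 0 \<and> t = 0) \<or> (s = t \<and> x = y))}"

text \<open>The quotient map eta : [0,1] x X -> Cone(X); points of the cone are equivalence classes.
  cone_pt X t x is the point written t x in the paper.\<close>
definition cone_eta :: "'a topology \<Rightarrow> real \<times> 'a \<Rightarrow> (real \<times> 'a) set" where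
  "cone_eta X p = cone_rel X `` {p}"

definition cone_pt :: "'a topology \<Rightarrow> real \<Rightarrow> 'a \<Rightarrow> (real \<times> 'a) set" where
  "cone_pt X t x = cone_eta X (t, x)"

definition cone_topology :: "'a topology \<Rightarrow> (real \<times> 'a) set topology" where
  "cone_topology X = quotient_topology (prod_topology (top_of_set {0..1}) X) (cone_eta X)"

text \<open>Gamma(X): homeomorphisms between open subsets of X, as partial maps (the empty map included).\<close>
definition Gamma :: "'a topology \<Rightarrow> ('a \<rightharpoonup> 'a) set" where
  "Gamma X = {f. openin X (dom f) \<and> openin X (ran f) \<and>
                 homeomorphic_map (subtopology X (dom f)) (subtopology X (ran f)) (\<lambda>x. the (f x))}"

text \<open>X is Gamma-embedded in Z via sigma and c. The product in Gamma is composition of partial maps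
  (map_comp g f has domain f^-1(dom g \<inter> im f)).\<close>
definition Gamma_embedding_via ::
    "'a topology \<Rightarrow> 'b topology \<Rightarrow> (('a \<rightharpoonup> 'a) \<Rightarrow> ('b \<rightharpoonup> 'b)) \<Rightarrow> ('a \<Rightarrow> 'b) \<Rightarrow> bool" where
  "Gamma_embedding_via X Z \<sigma> c \<longleftrightarrow>
     (\<forall>f\<in>Gamma X. \<sigma> f \<in> Gamma Z) \<and>
     (\<forall>f\<in>Gamma X. \<forall>g\<in>Gamma X. \<sigma> (g \<circ>\<^sub>m f) = \<sigma> g \<circ>\<^sub>m \<sigma> f) \<and>
     embedding_map X Z c \<and>
     (\<forall>f\<in>Gamma X. \<forall>x\<in>dom f. c x \<in> dom (\<sigma> f) \<and> \<sigma> f (c x) = Some (c (the (f x))))"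

definition Gamma_embedded :: "'a topology \<Rightarrow> 'b topology \<Rightarrow> bool" where
  "Gamma_embedded X Z \<longleftrightarrow> (\<exists>\<sigma> c. Gamma_embedding_via X Z \<sigma> c)"

definition cone_incl :: "'a topology \<Rightarrow> 'a \<Rightarrow> (real \<times> 'a) set" where
  "cone_incl X x = cone_pt X 1 x"

definition cone_sigma :: "'a topology \<Rightarrow> ('a \<rightharpoonup> 'a) \<Rightarrow> ((real \<times> 'a) set \<rightharpoonup> (real \<times> 'a) set)" where
  "cone_sigma X f p =
     (if \<exists>t x. t \<in> {0<..1} \<and> x \<in> dom f \<and> p = cone_pt X t x
      then Some (let (t, x) = (SOME (t, x). t \<in> {0<..1} \<and> x \<in> dom f \<and> p = cone_pt X t x)
                 in cone_pt X t (the (f x)))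
      else None)"

end

theory Submission
  imports Defs
begin

(* Away from the apex the quotient map eta is injective, and for D open in X the set
   (0,1] x D is open and saturated; hence eta restricts to a homeomorphism from (0,1] x D onto
   an open subset of Cone(X). Under these homeomorphisms sigma(f) is the product map id x f,
   a homeomorphism between open sets, and c is eta composed with the slice embedding
   x |-> (1, x). Since sigma(f)(t x) is t f(x) when f(x) is defined and undefined otherwise,
   sigma preserves composition of partial maps. *)

lemma istopology_quotient_topology:
  "istopology (\<lambda>U. U \<subseteq> q ` topspace X \<and> openin X {x \<in> topspace X. q x \<in> U})"
  unfolding istopology_def
proof (rule conjI; intro allI impI)
  fix S T
  assume "S \<subseteq> q ` topspace X \<and> openin X {x \<in> topspace X. q x \<in> S}"
    and "T \<subseteq> q ` topspace X \<and> openin X {x \<in> topspace X. q x \<in> T}"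
  moreover have "{x \<in> topspace X. q x \<in> S \<inter> T}
      = {x \<in> topspace X. q x \<in> S} \<inter> {x \<in> topspace X. q x \<in> T}"
    by auto
  ultimately show "S \<inter> T \<subseteq> q ` topspace X \<and> openin X {x \<in> topspace X. q x \<in> S \<inter> T}"
    by auto
next
  fix K
  assume K: "\<forall>S\<in>K. S \<subseteq> q ` topspace X \<and> openin X {x \<in> topspace X. q x \<in> S}"
  have "{x \<in> topspace X. q x \<in> \<Union>K} = (\<Union>S\<in>K. {x \<in> topspace X. q x \<in> S})"
    by auto
  moreover have "openin X (\<Union>S\<in>K. {x \<in> topspace X. q x \<in> S})"
    using K by (intro openin_Union) auto
  ultimately show "\<Union>K \<subseteq> q ` topspace X \<and> openin X {x \<in> topspace X. q x \<in> \<Union>K}"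
    using K by auto
qed

lemma openin_quotient_topology:
  "openin (quotient_topology X q) U \<longleftrightarrow>
     U \<subseteq> q ` topspace X \<and> openin X {x \<in> topspace X. q x \<in> U}"
  unfolding quotient_topology_def using istopology_quotient_topology[of q X] by simp

lemma topspace_quotient_topology: "topspace (quotient_topology X q) = q ` topspace X"
proof
  show "topspace (quotient_topology X q) \<subseteq> q ` topspace X"
    using openin_topspace[of "quotient_topology X q"] unfolding openin_quotient_topology by blast
  have "{x \<in> topspace X. q x \<in> q ` topspace X} = topspace X"
    by auto
  then have "openin (quotient_topology X q) (q ` topspace X)"
    by (simp add: openin_quotient_topology)
  then show "q ` topspace X \<subseteq> topspace (quotient_topology X q)"
    by (rule openin_subset)
qed

lemma quotient_map_quotient_topology: "quotient_map X (quotient_topology X q) q"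
  unfolding quotient_map_def topspace_quotient_topology openin_quotient_topology by auto

lemma embedding_map_Pair_const:
  assumes "a \<in> topspace Y"
  shows "embedding_map X (prod_topology Y X) (Pair a)"
proof -
  have "embedding_map X (prod_topology X Y) (\<lambda>x. (x, a))"
    using assms by (simp add: embedding_map_graph)
  moreover have "embedding_map (prod_topology X Y) (prod_topology Y X) (\<lambda>(x, y). (y, x))"
    using homeomorphic_map_swap surjective_embedding_map by blast
  ultimately have "embedding_map X (prod_topology Y X) ((\<lambda>(x, y). (y, x)) \<circ> (\<lambda>x. (x, a)))"
    by (rule embedding_map_compose)
  then show ?thesis
    by (simp add: o_def)
qed

lemma homeomorphic_map_map_prod_id:
  assumes "homeomorphic_map X X' f"
  shows "homeomorphic_map (prod_topology Y X) (prod_topology Y X') (map_prod id f)"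
proof -
  obtain g where "homeomorphic_maps X X' f g"
    using assms homeomorphic_map_maps by blast
  moreover have "homeomorphic_maps Y Y id id"
    by (simp add: homeomorphic_maps_id)
  ultimately have "homeomorphic_maps (prod_topology Y X) (prod_topology Y X')
      (\<lambda>(t, x). (id t, f x)) (\<lambda>(t, x). (id t, g x))"
    using homeomorphic_maps_prod by blast
  then show ?thesis
    by (simp add: homeomorphic_maps_imp_map map_prod_def)
qed

lemma homeomorphic_compose_homeomorphic_map:
  assumes q: "homeomorphic_map A B q" and gq: "homeomorphic_map A C (g \<circ> q)"
  shows "homeomorphic_map B C g"
proof -
  obtain q' where q': "homeomorphic_maps A B q q'"
    using q homeomorphic_map_maps by blast
  then have "homeomorphic_map B A q'"
    using homeomorphic_maps_imp_map homeomorphic_maps_sym by blast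
  then have "homeomorphic_map B C ((g \<circ> q) \<circ> q')"
    using gq by (rule homeomorphic_map_compose)
  then show ?thesis
    by (rule homeomorphic_map_eq) (use q' in \<open>simp add: homeomorphic_maps_def\<close>)
qed

abbreviation cylinder :: "'a topology \<Rightarrow> (real \<times> 'a) topology" where
  "cylinder X \<equiv> prod_topology (top_of_set {0..1}) X"

lemma quotient_map_cone_eta: "quotient_map (cylinder X) (cone_topology X) (cone_eta X)"
  unfolding cone_topology_def by (rule quotient_map_quotient_topology)

lemma cone_eta_Pair [simp]: "cone_eta X (t, x) = cone_pt X t x"
  by (simp add: cone_pt_def)

lemma cone_pt_eq_singleton:
  "t \<in> {0<..1} \<Longrightarrow> x \<in> topspace X \<Longrightarrow> cone_pt X t x = {(t, x)}"
  unfolding cone_pt_def cone_eta_def cone_rel_def by auto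

lemma cone_pt_eq_pos_iff:
  assumes "t \<in> {0<..1}" "x \<in> topspace X"
  shows "cone_pt X s y = cone_pt X t x \<longleftrightarrow> s = t \<and> y = x"
proof
  assume "cone_pt X s y = cone_pt X t x"
  then have "(t, x) \<in> cone_pt X s y"
    using assms by (simp add: cone_pt_eq_singleton)
  then have "((s, y), (t, x)) \<in> cone_rel X"
    by (simp add: cone_pt_def cone_eta_def)
  then show "s = t \<and> y = x"
    using assms(1) unfolding cone_rel_def by auto
qed simp

lemma cone_eta_vimage_pos:
  assumes "D \<subseteq> topspace X"
  shows "{p \<in> topspace (cylinder X). cone_eta X p \<in> cone_eta X ` ({0<..1} \<times> D)} = {0<..1} \<times> D"
  using assms by (force simp: cone_pt_eq_pos_iff)

lemma openin_cone_eta_pos: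
  assumes "openin X D"
  shows "openin (cone_topology X) (cone_eta X ` ({0<..1} \<times> D))"
proof -
  have D: "D \<subseteq> topspace X"
    using assms by (rule openin_subset)
  have "openin (top_of_set {0..1::real}) {0<..1}"
    unfolding openin_open by (rule exI[of _ "{0<..}"]) auto
  then have "openin (cylinder X) ({0<..1} \<times> D)"
    using assms by (simp add: openin_prod_Times_iff)
  moreover have "cone_eta X ` ({0<..1} \<times> D) \<subseteq> cone_eta X ` topspace (cylinder X)"
    using D by (intro image_mono) auto
  ultimately show ?thesis
    unfolding cone_topology_def openin_quotient_topology cone_eta_vimage_pos[OF D] by simp
qed

lemma homeomorphic_map_cone_eta_pos:
  assumes "openin X D"
  shows "homeomorphic_map (subtopology (cylinder X) ({0<..1} \<times> D))
           (subtopology (cone_topology X) (cone_eta X ` ({0<..1} \<times> D))) (cone_eta X)"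
proof -
  have D: "D \<subseteq> topspace X"
    using assms by (rule openin_subset)
  have "quotient_map (subtopology (cylinder X) ({0<..1} \<times> D))
           (subtopology (cone_topology X) (cone_eta X ` ({0<..1} \<times> D))) (cone_eta X)"
    by (rule quotient_map_restriction[OF quotient_map_cone_eta cone_eta_vimage_pos[OF D]])
      (simp add: openin_cone_eta_pos[OF assms])
  moreover have "inj_on (cone_eta X) (topspace (subtopology (cylinder X) ({0<..1} \<times> D)))"
    using D by (force simp: inj_on_def cone_pt_eq_pos_iff)
  ultimately show ?thesis
    by (simp add: homeomorphic_map_def)
qed

lemma embedding_map_cone_incl: "embedding_map X (cone_topology X) (cone_incl X)"
proof -
  have "embedding_map X (cylinder X) (Pair 1)"
    by (rule embedding_map_Pair_const) simp
  then have "embedding_map X (subtopology (cylinder X) ({0<..1} \<times> topspace X)) (Pair 1)"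
    by (auto simp: embedding_map_in_subtopology)
  moreover have "embedding_map (subtopology (cylinder X) ({0<..1} \<times> topspace X)) (cone_topology X)
      (cone_eta X)"
    using homeomorphic_map_cone_eta_pos[of X "topspace X"]
    unfolding embedding_map_def
    by (simp add: Times_Int_Times Int_absorb1 greaterThanAtMost_subseteq_atLeastAtMost_iff)
  ultimately have "embedding_map X (cone_topology X) (cone_eta X \<circ> Pair 1)"
    by (rule embedding_map_compose)
  then show ?thesis
    by (rule embedding_map_eq) (simp add: cone_incl_def)
qed

lemma cone_sigma_cone_pt:
  assumes "t \<in> {0<..1}" "x \<in> topspace X" "dom f \<subseteq> topspace X"
  shows "cone_sigma X f (cone_pt X t x) = map_option (cone_pt X t) (f x)"
proof -
  have witness_iff: "t' \<in> {0<..1} \<and> x' \<in> dom f \<and> cone_pt X t x = cone_pt X t' x'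
      \<longleftrightarrow> t' = t \<and> x' = x \<and> x \<in> dom f" for t' x'
    using assms cone_pt_eq_pos_iff[OF assms(1,2), of t' x'] by auto
  have "(SOME (t', x'). t' = t \<and> x' = x) = (t, x)"
    by (rule some_equality) auto
  then show ?thesis
    unfolding cone_sigma_def witness_iff by auto
qed

lemma dom_cone_sigma: "dom (cone_sigma X f) = cone_eta X ` ({0<..1} \<times> dom f)"
  unfolding cone_sigma_def by (force simp: dom_def split: if_splits)

lemma ran_cone_sigma:
  assumes "dom f \<subseteq> topspace X"
  shows "ran (cone_sigma X f) = cone_eta X ` ({0<..1} \<times> ran f)"
proof (intro subset_antisym subsetI)
  fix b
  assume "b \<in> ran (cone_sigma X f)"
  then obtain a where a: "cone_sigma X f a = Some b"
    by (auto simp: ran_def)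
  then have "a \<in> cone_eta X ` ({0<..1} \<times> dom f)"
    unfolding dom_cone_sigma[symmetric] by (rule domI)
  then obtain t x y where "t \<in> {0<..1}" "f x = Some y" "a = cone_pt X t x"
    by auto
  moreover have "y \<in> ran f"
    using \<open>f x = Some y\<close> by (rule ranI)
  ultimately show "b \<in> cone_eta X ` ({0<..1} \<times> ran f)"
    using a assms
    by (auto simp: cone_sigma_cone_pt domI subsetD intro!: image_eqI[of _ _ "(t, y)"])
next
  fix b
  assume "b \<in> cone_eta X ` ({0<..1} \<times> ran f)"
  then obtain t x y where "t \<in> {0<..1}" "f x = Some y" "b = cone_pt X t y"
    by (auto simp: ran_def)
  then have "cone_sigma X f (cone_pt X t x) = Some b"
    using assms by (simp add: cone_sigma_cone_pt domI subsetD)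
  then show "b \<in> ran (cone_sigma X f)"
    by (rule ranI)
qed

lemma cone_sigma_map_comp:
  assumes "dom f \<subseteq> topspace X" "ran f \<subseteq> topspace X" "dom g \<subseteq> topspace X"
  shows "cone_sigma X (g \<circ>\<^sub>m f) = cone_sigma X g \<circ>\<^sub>m cone_sigma X f"
proof
  fix p
  have dom_gf: "dom (g \<circ>\<^sub>m f) \<subseteq> topspace X"
    using assms(1) by (auto simp: map_comp_def split: option.splits)
  show "cone_sigma X (g \<circ>\<^sub>m f) p = (cone_sigma X g \<circ>\<^sub>m cone_sigma X f) p"
  proof (cases "p \<in> cone_eta X ` ({0<..1} \<times> topspace X)")
    case True
    then obtain t x where "t \<in> {0<..1}" "x \<in> topspace X" "p = cone_pt X t x"
      by auto
    then show ?thesis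
      using assms dom_gf
      by (auto simp: cone_sigma_cone_pt map_comp_def ranI subsetD split: option.split)
  next
    case False
    then have "p \<notin> dom (cone_sigma X f)" "p \<notin> dom (cone_sigma X (g \<circ>\<^sub>m f))"
      using assms(1) dom_gf by (auto simp: dom_cone_sigma)
    then show ?thesis
      by (simp add: domIff)
  qed
qed

lemma openin_Gamma:
  assumes "f \<in> Gamma X"
  shows "openin X (dom f)" "openin X (ran f)"
  using assms unfolding Gamma_def by simp_all

lemma cone_sigma_Gamma:
  assumes "f \<in> Gamma X"
  shows "cone_sigma X f \<in> Gamma (cone_topology X)"
proof -
  have D: "openin X (dom f)" and R: "openin X (ran f)"
    using assms by (rule openin_Gamma)+
  have "homeomorphic_map (subtopology X (dom f)) (subtopology X (ran f)) (\<lambda>x. the (f x))"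
    using assms unfolding Gamma_def by simp
  then have "homeomorphic_map (subtopology (cylinder X) ({0<..1} \<times> dom f))
      (subtopology (cylinder X) ({0<..1} \<times> ran f)) (map_prod id (\<lambda>x. the (f x)))"
    unfolding subtopology_Times by (rule homeomorphic_map_map_prod_id)
  then have "homeomorphic_map (subtopology (cylinder X) ({0<..1} \<times> dom f))
      (subtopology (cone_topology X) (cone_eta X ` ({0<..1} \<times> ran f)))
      (cone_eta X \<circ> map_prod id (\<lambda>x. the (f x)))"
    using homeomorphic_map_cone_eta_pos[OF R] by (rule homeomorphic_map_compose)
  then have "homeomorphic_map (subtopology (cylinder X) ({0<..1} \<times> dom f))
      (subtopology (cone_topology X) (cone_eta X ` ({0<..1} \<times> ran f)))
      ((\<lambda>p. the (cone_sigma X f p)) \<circ> cone_eta X)"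
    by (rule homeomorphic_map_eq)
      (use openin_subset[OF D] in \<open>auto simp: cone_sigma_cone_pt domIff\<close>)
  then have "homeomorphic_map (subtopology (cone_topology X) (cone_eta X ` ({0<..1} \<times> dom f)))
      (subtopology (cone_topology X) (cone_eta X ` ({0<..1} \<times> ran f)))
      (\<lambda>p. the (cone_sigma X f p))"
    using homeomorphic_map_cone_eta_pos[OF D] homeomorphic_compose_homeomorphic_map by blast
  then show ?thesis
    using openin_cone_eta_pos[OF D] openin_cone_eta_pos[OF R]
    by (simp add: Gamma_def dom_cone_sigma ran_cone_sigma[OF openin_subset[OF D]])
qed

theorem proposition2p7:
  fixes X :: "'a topology"
  shows "Gamma_embedding_via X (cone_topology X) (cone_sigma X) (cone_incl X)
         \<and> Gamma_embedded X (cone_topology X)"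
proof -
  have "Gamma_embedding_via X (cone_topology X) (cone_sigma X) (cone_incl X)"
    unfolding Gamma_embedding_via_def
  proof (intro conjI ballI)
    fix f g
    assume "f \<in> Gamma X" "g \<in> Gamma X"
    then show "cone_sigma X (g \<circ>\<^sub>m f) = cone_sigma X g \<circ>\<^sub>m cone_sigma X f"
      by (intro cone_sigma_map_comp openin_subset openin_Gamma)
  next
    fix f x
    assume f: "f \<in> Gamma X" and x: "x \<in> dom f"
    have "dom f \<subseteq> topspace X"
      using openin_subset[OF openin_Gamma(1)[OF f]] .
    then have "cone_sigma X f (cone_incl X x) = Some (cone_incl X (the (f x)))"
      using x by (auto simp: cone_incl_def cone_sigma_cone_pt subsetD)
    then show "cone_incl X x \<in> dom (cone_sigma X f)"
      and "cone_sigma X f (cone_incl X x) = Some (cone_incl X (the (f x)))"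
      by auto
  qed (simp_all add: cone_sigma_Gamma embedding_map_cone_incl)
  then show ?thesis
    unfolding Gamma_embedded_def by blast
qed

end
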